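(* In the stochastic epidemic model described in the context, let $u(k)=K\,I(k)$ for all $k\ge0$ with a constant gain $\delta_{\max}/v_{\min}\le K\le (1-d_{\max})/v_{\max}$. Then for all $k\ge1$, with probability one, $$D(k)\le\begin{cases}\dfrac{d_{\max}I_0\left(1-(\delta_{\max}-Kv_{\min}+1)^k\right)}{Kv_{\min}-\delta_{\max}}, & \delta_{\max}<Kv_{\min},\\[2mm] d_{\max}I_0\,k, & \delta_{\max}=Kv_{\min}.\end{cases}$$
   Context: Time is indexed by days $k=0,1,2,\dots$. Let $(\delta(k))_{k\ge0}$, $(d_I(k))_{k\ge0}$, $(v(k))_{k\ge0}$ be three mutually independent sequences of random variables, each sequence i.i.d. in $k$, with $0\le \delta(k)\le \delta_{\max}$, $0\le d_I(k)\le d_{\max}$ where $d_{\max}<1$, and $0<v_{\min}\le v(k)\le v_{\max}\le 1$. Given a control sequence $u(k)$, the cases evolve by $S(k+1)=S(k)-\delta(k)I(k)$, $I(k+1)=(1+\delta(k))I(k)-v(k)u(k)-d_I(k)I(k)$, $R(k+1)=R(k)+v(k)u(k)$, $D(k+1)=D(k)+d_I(k)I(k)$, with $S(0)=S_0$, $I(0)=I_0>0$, $R(0)=D(0)=0$, $I_0\delta_{\max}<S_0$. *)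

theory Defs
  imports "HOL-Probability.Probability"
begin

datatype noise = Infect | Death | Vacc

text \<open>The joint family of all noise random variables, indexed by (sequence label, day).
  Mutual independence of the three i.i.d. sequences is expressed as independence of this family.\<close>
definition noise_family ::
  "(nat \<Rightarrow> 'a \<Rightarrow> real) \<Rightarrow> (nat \<Rightarrow> 'a \<Rightarrow> real) \<Rightarrow> (nat \<Rightarrow> 'a \<Rightarrow> real) \<Rightarrow> noise \<times> nat \<Rightarrow> 'a \<Rightarrow> real"
  where "noise_family dl dI v = (\<lambda>(j, k). case j of Infect \<Rightarrow> dl k | Death \<Rightarrow> dI k | Vacc \<Rightarrow> v k)"

end

theory Submission
  imports Defs
begin

text \<open>Under the proportional control u = K I the infected population obeys the linear
  recurrence I(k+1) = c(k) I(k) with random factor c(k) = 1 + \<delta>(k) - K v(k) - d_I(k).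
  The two bounds on K put c(k) in [0, q] with q = \<delta>_max - K v_min + 1 \<le> 1, so
  0 \<le> I(k) \<le> I_0 q^k, and summing the daily deaths d_I(k) I(k) \<le> d_max I_0 q^k gives a
  geometric sum. The bound holds for every outcome.\<close>

lemma growth_factor_bounds:
  fixes dl dI v dl_max d_max v_min v_max K :: real
  assumes "0 \<le> dl" "dl \<le> dl_max" "0 \<le> dI" "dI \<le> d_max" "v_min \<le> v" "v \<le> v_max"
    and "0 < v_min" "dl_max / v_min \<le> K" "K \<le> (1 - d_max) / v_max"
  shows "0 \<le> 1 + dl - v * K - dI" and "1 + dl - v * K - dI \<le> dl_max - K * v_min + 1"
proof -
  have "0 \<le> K"
    using assms(1,2,7,8) by (meson divide_nonneg_pos order_trans)
  have "K * v_max \<le> 1 - d_max"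
    using assms(5-7,9) by (simp add: pos_le_divide_eq)
  moreover have "v * K \<le> v_max * K" and "v_min * K \<le> v * K"
    using assms(5,6) \<open>0 \<le> K\<close> by (simp_all add: mult_right_mono)
  ultimately show "0 \<le> 1 + dl - v * K - dI" and "1 + dl - v * K - dI \<le> dl_max - K * v_min + 1"
    using assms(1-4) by (simp_all add: mult.commute)
qed

lemma linear_recurrence_bounds:
  fixes x c :: "nat \<Rightarrow> real"
  assumes step: "\<And>k. x (Suc k) = c k * x k"
    and c_nonneg: "\<And>k. 0 \<le> c k" and c_le: "\<And>k. c k \<le> q" and "0 \<le> x 0"
  shows "0 \<le> x k \<and> x k \<le> x 0 * q ^ k"
proof (induction k)
  case 0
  then show ?case using \<open>0 \<le> x 0\<close> by simp
next
  case (Suc k)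
  then have "0 \<le> x k" and "x k \<le> x 0 * q ^ k" by auto
  have "0 \<le> x (Suc k)"
    using step c_nonneg \<open>0 \<le> x k\<close> by simp
  moreover have "x (Suc k) \<le> q * (x 0 * q ^ k)"
    unfolding step using c_nonneg c_le \<open>0 \<le> x k\<close> \<open>x k \<le> x 0 * q ^ k\<close>
    by (meson mult_mono order_trans)
  ultimately show ?case by (simp add: algebra_simps)
qed

lemma accumulated_le_geometric_sum:
  fixes D a x :: "nat \<Rightarrow> real"
  assumes step: "\<And>k. D (Suc k) = D k + a k * x k" and "D 0 = 0"
    and a_bounds: "\<And>k. 0 \<le> a k \<and> a k \<le> d"
    and x_bounds: "\<And>k. 0 \<le> x k \<and> x k \<le> b * q ^ k"
  shows "D k \<le> d * b * (\<Sum>j<k. q ^ j)"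
proof (induction k)
  case 0
  then show ?case using \<open>D 0 = 0\<close> by simp
next
  case (Suc k)
  have "a k * x k \<le> d * (b * q ^ k)"
    using a_bounds[of k] x_bounds[of k] by (intro mult_mono) auto
  then show ?case using Suc step[of k] by (simp add: algebra_simps)
qed

theorem lemma8:
  fixes M :: "'a measure"
    and dl dI v :: "nat \<Rightarrow> 'a \<Rightarrow> real"
    and S I R D u :: "nat \<Rightarrow> 'a \<Rightarrow> real"
    and dl_max d_max v_min v_max S0 I0 K :: real
  assumes "prob_space M"
    and indep: "prob_space.indep_vars M (\<lambda>_. borel) (noise_family dl dI v) UNIV"
    and iid_dl: "\<And>k. distr M borel (dl k) = distr M borel (dl 0)"
    and iid_dI: "\<And>k. distr M borel (dI k) = distr M borel (dI 0)"
    and iid_v: "\<And>k. distr M borel (v k) = distr M borel (v 0)"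
    and dl_bnd: "\<And>k \<omega>. \<omega> \<in> space M \<Longrightarrow> 0 \<le> dl k \<omega> \<and> dl k \<omega> \<le> dl_max"
    and dI_bnd: "\<And>k \<omega>. \<omega> \<in> space M \<Longrightarrow> 0 \<le> dI k \<omega> \<and> dI k \<omega> \<le> d_max"
    and d_max_lt: "d_max < 1"
    and v_bnd: "\<And>k \<omega>. \<omega> \<in> space M \<Longrightarrow> v_min \<le> v k \<omega> \<and> v k \<omega> \<le> v_max"
    and v_min_pos: "0 < v_min" and v_max_le: "v_max \<le> 1"
    and S_0: "\<And>\<omega>. S 0 \<omega> = S0" and I_0: "\<And>\<omega>. I 0 \<omega> = I0"
    and R_0: "\<And>\<omega>. R 0 \<omega> = 0" and D_0: "\<And>\<omega>. D 0 \<omega> = 0"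
    and I0_pos: "I0 > 0" and init: "I0 * dl_max < S0"
    and S_step: "\<And>k \<omega>. S (Suc k) \<omega> = S k \<omega> - dl k \<omega> * I k \<omega>"
    and I_step: "\<And>k \<omega>. I (Suc k) \<omega> = (1 + dl k \<omega>) * I k \<omega> - v k \<omega> * u k \<omega> - dI k \<omega> * I k \<omega>"
    and R_step: "\<And>k \<omega>. R (Suc k) \<omega> = R k \<omega> + v k \<omega> * u k \<omega>"
    and D_step: "\<And>k \<omega>. D (Suc k) \<omega> = D k \<omega> + dI k \<omega> * I k \<omega>"
    and control: "\<And>k \<omega>. u k \<omega> = K * I k \<omega>"
    and K_lo: "dl_max / v_min \<le> K" and K_hi: "K \<le> (1 - d_max) / v_max"
  shows "\<forall>k\<ge>1. AE \<omega> in M.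
           (dl_max < K * v_min \<longrightarrow>
              D k \<omega> \<le> d_max * I0 * (1 - (dl_max - K * v_min + 1) ^ k) / (K * v_min - dl_max))
         \<and> (dl_max = K * v_min \<longrightarrow> D k \<omega> \<le> d_max * I0 * real k)"
proof -
  define q where "q = dl_max - K * v_min + 1"
  have D_bound: "D k \<omega> \<le> d_max * I0 * (\<Sum>j<k. q ^ j)" if "\<omega> \<in> space M" for k \<omega>
  proof -
    let ?c = "\<lambda>k. 1 + dl k \<omega> - v k \<omega> * K - dI k \<omega>"
    have c_bounds: "0 \<le> ?c k" "?c k \<le> q" for k
      using growth_factor_bounds[OF _ _ _ _ _ _ v_min_pos K_lo K_hi]
        dl_bnd[OF that, of k] dI_bnd[OF that, of k] v_bnd[OF that, of k]
      unfolding q_def by auto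
    have "I (Suc k) \<omega> = ?c k * I k \<omega>" for k
      using I_step[of k \<omega>] control[of k \<omega>] by (simp add: algebra_simps)
    then have "0 \<le> I k \<omega> \<and> I k \<omega> \<le> I0 * q ^ k" for k
      using linear_recurrence_bounds[of "\<lambda>k. I k \<omega>" ?c q] c_bounds I_0 I0_pos by auto
    then show ?thesis
      using accumulated_le_geometric_sum[of "\<lambda>k. D k \<omega>" "\<lambda>k. dI k \<omega>" "\<lambda>k. I k \<omega>"]
        D_step D_0 dI_bnd[OF that] by blast
  qed
  show ?thesis
  proof (intro allI impI AE_I2 conjI)
    fix k :: nat and \<omega> assume "\<omega> \<in> space M"
    note D = D_bound[OF this, of k]
    show "D k \<omega> \<le> d_max * I0 * (1 - (dl_max - K * v_min + 1) ^ k) / (K * v_min - dl_max)"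
      if "dl_max < K * v_min"
    proof -
      have "q \<noteq> 1" and gap: "K * v_min - dl_max = 1 - q"
        using that unfolding q_def by auto
      then have "(\<Sum>j<k. q ^ j) = (1 - q ^ k) / (1 - q)"
        using geometric_sum[of q k] by (simp add: field_simps)
      then have "(\<Sum>j<k. q ^ j) = (1 - q ^ k) / (K * v_min - dl_max)"
        by (simp only: gap)
      with D show ?thesis unfolding q_def by simp
    qed
    show "D k \<omega> \<le> d_max * I0 * real k" if "dl_max = K * v_min"
      using D that unfolding q_def by simp
  qed
qed

end
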